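(* Let $(\Omega,\mathcal A)$ be a measurable space, let $K\subset\mathbb C^n$ be compact and let $A=C(K)$ or $A=P(K)$. Let $f_1,\ldots,f_m:\Omega\times K\to\mathbb C$ each satisfy $f_i(\omega,\cdot)\in A$ for all $\omega$ and $f_i(\cdot,z)$ measurable for all $z\in K$. Then $\omega\mapsto\sigma(f_1(\omega,\cdot),\ldots,f_m(\omega,\cdot))$ is a random compact set in $\mathbb C^m$.
   Context: $P(K)$ is the closure in $C(K)$ (sup norm) of the polynomials. For $h_1,\dots,h_m\in A$ with maximal ideal space $M_A$, the joint spectrum is $\sigma(h_1,\ldots,h_m)=\{(\phi(h_1),\ldots,\phi(h_m)):\phi\in M_A\}$. A random compact set in $\mathbb C^m$ is a measurable map from $\Omega$ to the space of non-empty compact subsets of $\mathbb C^m$ with the Hausdorff distance and its Borel $\sigma$-algebra. *)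

theory Defs
  imports "HOL-Analysis.Analysis"
begin

inductive_set polyfun :: "(complex^'n \<Rightarrow> complex) set" where
  const: "(\<lambda>z. c) \<in> polyfun"
| coord: "(\<lambda>z. z $ i) \<in> polyfun"
| add: "p \<in> polyfun \<Longrightarrow> q \<in> polyfun \<Longrightarrow> (\<lambda>z. p z + q z) \<in> polyfun"
| mult: "p \<in> polyfun \<Longrightarrow> q \<in> polyfun \<Longrightarrow> (\<lambda>z. p z * q z) \<in> polyfun"

definition CK :: "(complex^'n::finite) set \<Rightarrow> (complex^'n \<Rightarrow> complex) set" where
  "CK K = {f. continuous_on K f}"

definition PK :: "(complex^'n::finite) set \<Rightarrow> (complex^'n \<Rightarrow> complex) set" where
  "PK K = {f. \<exists>p::nat \<Rightarrow> complex^_ \<Rightarrow> complex. (\<forall>k. p k \<in> polyfun) \<and>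
              (\<forall>e>0. \<exists>N. \<forall>k\<ge>N. \<forall>z\<in>K. norm (p k z - f z) < e)}"

text \<open>Elements of A are functions on K; two functions agreeing on K are the same element.\<close>
definition characters ::
  "(complex^'n) set \<Rightarrow> (complex^'n \<Rightarrow> complex) set \<Rightarrow> ((complex^'n \<Rightarrow> complex) \<Rightarrow> complex) set" where
  "characters K A = {\<phi>.
     (\<forall>f\<in>A. \<forall>g\<in>A. (\<forall>z\<in>K. f z = g z) \<longrightarrow> \<phi> f = \<phi> g) \<and>
     (\<forall>f\<in>A. \<forall>g\<in>A. \<phi> (\<lambda>z. f z + g z) = \<phi> f + \<phi> g) \<and>
     (\<forall>f\<in>A. \<forall>c. \<phi> (\<lambda>z. c * f z) = c * \<phi> f) \<and>
     (\<forall>f\<in>A. \<forall>g\<in>A. \<phi> (\<lambda>z. f z * g z) = \<phi> f * \<phi> g) \<and>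
     \<phi> (\<lambda>z. 1) = 1}"

definition joint_spectrum ::
  "(complex^'n) set \<Rightarrow> (complex^'n \<Rightarrow> complex) set \<Rightarrow> ('m::finite \<Rightarrow> complex^'n \<Rightarrow> complex)
     \<Rightarrow> (complex^'m) set" where
  "joint_spectrum K A h = {(\<chi> i. \<phi> (h i)) | \<phi>. \<phi> \<in> characters K A}"

definition nonempty_compacts :: "'a::metric_space set set" where
  "nonempty_compacts = {S. compact S \<and> S \<noteq> {}}"

definition hausdorff_dist :: "'a::metric_space set \<Rightarrow> 'a set \<Rightarrow> real" where
  "hausdorff_dist S T = max (SUP x\<in>S. infdist x T) (SUP y\<in>T. infdist y S)"

definition hausdorff_open :: "'a::metric_space set set \<Rightarrow> bool" where
  "hausdorff_open U \<longleftrightarrow> U \<subseteq> nonempty_compacts \<and>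
     (\<forall>S\<in>U. \<exists>e>0. \<forall>T\<in>nonempty_compacts. hausdorff_dist S T < e \<longrightarrow> T \<in> U)"

definition hausdorff_borel :: "'a::metric_space set measure" where
  "hausdorff_borel = sigma nonempty_compacts {U. hausdorff_open U}"

definition random_compact_set :: "'w measure \<Rightarrow> ('w \<Rightarrow> 'a::metric_space set) \<Rightarrow> bool" where
  "random_compact_set M X \<longleftrightarrow> X \<in> measurable M hausdorff_borel"

end

(* For A = C(K) every character is evaluation at a point of K, so the joint spectrum of
   f_1(w,.), ..., f_m(w,.) is the image of K under z |-> (f_i(w,z))_i.  For A = P(K) a
   character is evaluation at a point of the polynomial hull of K (the point being the image
   of the coordinate functions) of the continuous extensions of the f_i(w,.), so the spectrum
   is the image of the compact hull.  In both cases the spectrum is the image of a fixed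
   compact set under a map that is continuous in the point and measurable in w.  Such an image
   is a random compact set: Hausdorff-open sets are countable unions of Hausdorff balls
   around finite sets, and the Hausdorff distance of the image to a finite set can be
   computed along a countable dense subset.  Measurability of the extensions in w comes from
   choosing, measurably in w, rational polynomials approximating f_i(w,.) on K. *)

theory Submission
  imports Defs
begin

lemma bdd_above_infdist_compact:
  assumes "compact S"
  shows "bdd_above ((\<lambda>x. infdist x T) ` S)"
  by (intro bounded_imp_bdd_above compact_imp_bounded compact_continuous_image
      continuous_intros assms)

lemma hausdorff_dist_commute: "hausdorff_dist S T = hausdorff_dist T S"
  unfolding hausdorff_dist_def by (simp add: max.commute)

lemma hausdorff_dist_le_iff:
  assumes "compact S" "S \<noteq> {}" "compact T" "T \<noteq> {}"
  shows "hausdorff_dist S T \<le> r \<longleftrightarrow> (\<forall>x\<in>S. infdist x T \<le> r) \<and> (\<forall>y\<in>T. infdist y S \<le> r)"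
  unfolding hausdorff_dist_def
  using assms bdd_above_infdist_compact[OF assms(1), of T] bdd_above_infdist_compact[OF assms(3), of S]
  by (simp add: cSUP_le_iff)

lemma infdist_le_hausdorff_dist:
  assumes "compact S" "S \<noteq> {}" "compact T" "T \<noteq> {}"
  shows "x \<in> S \<Longrightarrow> infdist x T \<le> hausdorff_dist S T"
    and "y \<in> T \<Longrightarrow> infdist y S \<le> hausdorff_dist S T"
  using hausdorff_dist_le_iff[OF assms, of "hausdorff_dist S T"] by auto

lemma infdist_le_infdist_add:
  assumes "B \<noteq> {}" "\<And>y. y \<in> B \<Longrightarrow> infdist y C \<le> c"
  shows "infdist x C \<le> infdist x B + c"
proof -
  have "infdist x C - c \<le> infdist x B"
    unfolding infdist_notempty[OF assms(1)]
  proof (rule cINF_greatest)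
    fix y assume "y \<in> B"
    have "infdist x C \<le> infdist y C + dist x y" by (rule infdist_triangle)
    with assms(2)[OF \<open>y \<in> B\<close>] show "infdist x C - c \<le> dist x y" by simp
  qed (use assms in auto)
  then show ?thesis by simp
qed

lemma hausdorff_dist_triangle:
  assumes "compact A" "A \<noteq> {}" "compact B" "B \<noteq> {}" "compact C" "C \<noteq> {}"
  shows "hausdorff_dist A C \<le> hausdorff_dist A B + hausdorff_dist B C"
proof (subst hausdorff_dist_le_iff[OF assms(1,2,5,6)], intro conjI ballI)
  fix x assume "x \<in> A"
  have "infdist x C \<le> infdist x B + hausdorff_dist B C"
    by (rule infdist_le_infdist_add) (use assms infdist_le_hausdorff_dist[OF assms(3-6)] in auto)
  also have "\<dots> \<le> hausdorff_dist A B + hausdorff_dist B C"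
    using infdist_le_hausdorff_dist(1)[OF assms(1-4) \<open>x \<in> A\<close>] by simp
  finally show "infdist x C \<le> hausdorff_dist A B + hausdorff_dist B C" .
next
  fix z assume "z \<in> C"
  have "infdist z A \<le> infdist z B + hausdorff_dist A B"
    by (rule infdist_le_infdist_add) (use assms infdist_le_hausdorff_dist[OF assms(1-4)] in auto)
  also have "\<dots> \<le> hausdorff_dist A B + hausdorff_dist B C"
    using infdist_le_hausdorff_dist(2)[OF assms(3-6) \<open>z \<in> C\<close>] by simp
  finally show "infdist z A \<le> hausdorff_dist A B + hausdorff_dist B C" .
qed

lemma hausdorff_dist_finite_approx:
  fixes S :: "'b::metric_space set"
  assumes "compact S" "S \<noteq> {}" "e > 0"
    and D: "\<And>X. open X \<Longrightarrow> X \<noteq> {} \<Longrightarrow> \<exists>d\<in>D. d \<in> X"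
  obtains T where "finite T" "T \<subseteq> D" "T \<noteq> {}" "hausdorff_dist S T \<le> e"
proof -
  obtain F where F: "F \<subseteq> S" "finite F" "S \<subseteq> (\<Union>x\<in>F. ball x (e/2))"
    using compactE_image[OF assms(1), of S "\<lambda>x. ball x (e/2)"] assms(3) by force
  have "\<forall>x. \<exists>d\<in>D. d \<in> ball x (e/2)"
    using D[of "ball x (e/2)" for x] assms(3) by auto
  then obtain q where q: "\<And>x. q x \<in> D" "\<And>x. dist x (q x) < e/2"
    by (metis mem_ball)
  define T where "T = q ` F"
  have T: "finite T" "T \<subseteq> D" "T \<noteq> {}" "compact T"
    using F assms(2) q by (auto simp: T_def intro: finite_imp_compact)
  have "hausdorff_dist S T \<le> e"
  proof (subst hausdorff_dist_le_iff[OF assms(1,2) T(4,3)], intro conjI ballI)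
    fix y assume "y \<in> S"
    then obtain x where x: "x \<in> F" "dist x y < e/2" using F by auto
    have "dist y (q x) \<le> dist y x + dist x (q x)" by (rule dist_triangle)
    also have "\<dots> \<le> e" using x q(2)[of x] by (simp add: dist_commute)
    finally show "infdist y T \<le> e"
      using x by (intro infdist_le2[of "q x"]) (auto simp: T_def)
  next
    fix t assume "t \<in> T"
    then obtain x where x: "x \<in> F" "t = q x" by (auto simp: T_def)
    have "dist t x = dist x (q x)" using x(2) by (simp add: dist_commute)
    then have "dist t x \<le> e" using q(2)[of x] zero_le_dist[of x "q x"] by linarith
    then show "infdist t S \<le> e"
      using x F by (intro infdist_le2[of x]) auto
  qed
  with T that show ?thesis by blast
qed

section \<open>Measurability into the Hausdorff metric space\<close>

lemma hausdorff_open_countable_balls: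
  fixes U :: "'b::{metric_space,second_countable_topology} set set"
  assumes "hausdorff_open U"
  obtains I where "countable I" "\<And>T r. (T, r) \<in> I \<Longrightarrow> finite T \<and> T \<noteq> {}"
    "\<And>S. S \<in> nonempty_compacts \<Longrightarrow> S \<in> U \<longleftrightarrow> (\<exists>(T, r)\<in>I. hausdorff_dist S T < r)"
proof -
  have U: "\<And>S. S \<in> U \<Longrightarrow> \<exists>e>0. \<forall>T\<in>nonempty_compacts. hausdorff_dist S T < e \<longrightarrow> T \<in> U"
    using assms by (auto simp: hausdorff_open_def)
  obtain D :: "'b set" where D: "countable D" "\<And>X. open X \<Longrightarrow> X \<noteq> {} \<Longrightarrow> \<exists>d\<in>D. d \<in> X"
    using countable_dense_setE by blast
  define I where "I = {(T, r). T \<in> {T. finite T \<and> T \<subseteq> D} \<and> T \<noteq> {} \<and> r \<in> \<rat> \<and>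
      (\<forall>S\<in>nonempty_compacts. hausdorff_dist S T < r \<longrightarrow> S \<in> U)}"
  have fin: "finite T \<and> T \<noteq> {}" if "(T, r) \<in> I" for T r
    using that by (auto simp: I_def)
  have cI: "countable I"
  proof (rule countable_subset)
    show "I \<subseteq> {T. finite T \<and> T \<subseteq> D} \<times> \<rat>" by (auto simp: I_def)
    show "countable ({T. finite T \<and> T \<subseteq> D} \<times> \<rat>)"
      by (intro countable_SIGMA countable_Collect_finite_subset D countable_rat)
  qed
  have iff: "S \<in> U \<longleftrightarrow> (\<exists>(T, r)\<in>I. hausdorff_dist S T < r)" if S: "S \<in> nonempty_compacts" for S
  proof
    assume "S \<in> U"
    then obtain e where e: "e > 0" "\<And>T. T \<in> nonempty_compacts \<Longrightarrow> hausdorff_dist S T < e \<Longrightarrow> T \<in> U"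
      using U by blast
    have Sc: "compact S" "S \<noteq> {}" using S by (auto simp: nonempty_compacts_def)
    obtain T where T: "finite T" "T \<subseteq> D" "T \<noteq> {}" "hausdorff_dist S T \<le> e/4"
      using hausdorff_dist_finite_approx[OF Sc, of "e/4" D] e D by auto
    obtain r where r: "r \<in> \<rat>" "e/4 < r" "r < e/2"
      using Rats_dense_in_real[of "e/4" "e/2"] e by auto
    have "S' \<in> U" if S': "S' \<in> nonempty_compacts" "hausdorff_dist S' T < r" for S'
    proof -
      have "hausdorff_dist S S' \<le> hausdorff_dist S T + hausdorff_dist T S'"
        by (rule hausdorff_dist_triangle) (use Sc S' T in \<open>auto simp: nonempty_compacts_def finite_imp_compact\<close>)
      also have "\<dots> < e" using T(4) S'(2) r by (simp add: hausdorff_dist_commute[of T S'])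
      finally show "S' \<in> U" using e(2)[OF S'(1)] by simp
    qed
    then have "(T, r) \<in> I" unfolding I_def using T r by simp
    then show "\<exists>(T, r)\<in>I. hausdorff_dist S T < r" using T(4) r by (intro bexI[of _ "(T, r)"]) auto
  qed (use S in \<open>auto simp: I_def\<close>)
  show ?thesis by (rule that[OF cI fin iff])
qed

lemma measurable_hausdorff_borelI:
  fixes X :: "'w \<Rightarrow> 'b::{metric_space,second_countable_topology} set"
  assumes X: "\<And>\<omega>. \<omega> \<in> space M \<Longrightarrow> X \<omega> \<in> nonempty_compacts"
    and dist: "\<And>T. finite T \<Longrightarrow> T \<noteq> {} \<Longrightarrow> (\<lambda>\<omega>. hausdorff_dist (X \<omega>) T) \<in> borel_measurable M"
  shows "X \<in> measurable M hausdorff_borel"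
  unfolding hausdorff_borel_def
proof (rule measurable_measure_of)
  show "{U. hausdorff_open U} \<subseteq> Pow nonempty_compacts"
    by (auto simp: hausdorff_open_def)
  show "X \<in> space M \<rightarrow> nonempty_compacts" using X by auto
  fix U :: "'b set set" assume "U \<in> {U. hausdorff_open U}"
  then obtain I where I: "countable I" "\<And>T r. (T, r) \<in> I \<Longrightarrow> finite T \<and> T \<noteq> {}"
    "\<And>S. S \<in> nonempty_compacts \<Longrightarrow> S \<in> U \<longleftrightarrow> (\<exists>(T, r)\<in>I. hausdorff_dist S T < r)"
    using hausdorff_open_countable_balls by blast
  have "X -` U \<inter> space M = (\<Union>(T, r)\<in>I. {\<omega>\<in>space M. hausdorff_dist (X \<omega>) T < r})"
    using X I(3) by fastforce
  also have "\<dots> \<in> sets M"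
  proof (rule sets.countable_UN''[OF I(1)], clarify)
    fix T r assume "(T, r) \<in> I"
    with I(2) dist have [measurable]: "(\<lambda>\<omega>. hausdorff_dist (X \<omega>) T) \<in> borel_measurable M"
      by blast
    show "{\<omega> \<in> space M. hausdorff_dist (X \<omega>) T < r} \<in> sets M" by measurable
  qed
  finally show "X -` U \<inter> space M \<in> sets M" .
qed


section \<open>Images of compact sets under random continuous maps\<close>

lemma cSUP_cINF_eq_on_dense:
  fixes g :: "'a::metric_space \<Rightarrow> real"
  assumes L: "compact L" "D \<subseteq> L" "L \<subseteq> closure D" "D \<noteq> {}" and g: "continuous_on L g"
  shows "(SUP w\<in>L. g w) = (SUP d\<in>D. g d)" and "(INF w\<in>L. g w) = (INF d\<in>D. g d)"
proof -
  have Lne: "L \<noteq> {}" using L by auto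
  have bL: "bounded (g ` L)" by (intro compact_imp_bounded compact_continuous_image g L)
  have bD: "bounded (g ` D)" by (rule bounded_subset[OF bL]) (use L in auto)
  have cl: "closure D \<subseteq> L" using L by (simp add: closure_minimal compact_imp_closed)
  have gc: "continuous_on (closure D) g" by (rule continuous_on_subset[OF g cl])
  have up: "g ` closure D \<subseteq> {..(SUP d\<in>D. g d)}"
    by (rule image_closure_subset[OF gc]) (use bD in \<open>auto intro!: cSUP_upper bounded_imp_bdd_above\<close>)
  have lo: "g ` closure D \<subseteq> {(INF d\<in>D. g d)..}"
    by (rule image_closure_subset[OF gc]) (use bD in \<open>auto intro!: cINF_lower bounded_imp_bdd_below\<close>)
  show "(SUP w\<in>L. g w) = (SUP d\<in>D. g d)"
  proof (rule antisym)
    show "(SUP w\<in>L. g w) \<le> (SUP d\<in>D. g d)"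
      by (rule cSUP_least[OF Lne]) (use up L in auto)
    show "(SUP d\<in>D. g d) \<le> (SUP w\<in>L. g w)"
      by (rule cSUP_subset_mono) (use L bL in \<open>auto intro: bounded_imp_bdd_above\<close>)
  qed
  show "(INF w\<in>L. g w) = (INF d\<in>D. g d)"
  proof (rule antisym)
    show "(INF d\<in>D. g d) \<le> (INF w\<in>L. g w)"
      by (rule cINF_greatest[OF Lne]) (use lo L in auto)
    show "(INF w\<in>L. g w) \<le> (INF d\<in>D. g d)"
      by (rule cINF_superset_mono) (use L bL in \<open>auto intro: bounded_imp_bdd_below\<close>)
  qed
qed

lemma hausdorff_dist_image_eq_dense:
  fixes g :: "'a::metric_space \<Rightarrow> 'b::metric_space"
  assumes L: "compact L" "D \<subseteq> L" "L \<subseteq> closure D" "D \<noteq> {}" and g: "continuous_on L g"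
  shows "hausdorff_dist (g ` L) T =
      max (SUP d\<in>D. infdist (g d) T) (SUP t\<in>T. INF d\<in>D. dist t (g d))"
proof -
  have "(SUP x\<in>g ` L. infdist x T) = (SUP w\<in>L. infdist (g w) T)"
    by (simp add: image_comp o_def)
  also have "\<dots> = (SUP d\<in>D. infdist (g d) T)"
    by (rule cSUP_cINF_eq_on_dense(1)[OF L]) (intro continuous_intros g)
  finally have "(SUP x\<in>g ` L. infdist x T) = (SUP d\<in>D. infdist (g d) T)" .
  moreover have "infdist t (g ` L) = (INF d\<in>D. dist t (g d))" for t
  proof -
    have "g ` L \<noteq> {}" using L by auto
    then have "infdist t (g ` L) = (INF w\<in>L. dist t (g w))"
      by (simp add: infdist_notempty image_comp o_def)
    also have "\<dots> = (INF d\<in>D. dist t (g d))"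
      by (rule cSUP_cINF_eq_on_dense(2)[OF L]) (intro continuous_intros g)
    finally show ?thesis .
  qed
  ultimately show ?thesis unfolding hausdorff_dist_def by simp
qed

lemma measurable_hausdorff_dist_image:
  fixes \<Phi> :: "'w \<Rightarrow> 'a::{metric_space,second_countable_topology} \<Rightarrow> 'b::metric_space"
  assumes L: "compact L" "L \<noteq> {}"
    and cont: "\<And>\<omega>. \<omega> \<in> space M \<Longrightarrow> continuous_on L (\<Phi> \<omega>)"
    and meas: "\<And>w. w \<in> L \<Longrightarrow> (\<lambda>\<omega>. \<Phi> \<omega> w) \<in> borel_measurable M"
    and T: "finite T"
  shows "(\<lambda>\<omega>. hausdorff_dist (\<Phi> \<omega> ` L) T) \<in> borel_measurable M"
proof -
  obtain D where D: "countable D" "D \<subseteq> L" "L \<subseteq> closure D"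
    using separable[of L] by blast
  have Dne: "D \<noteq> {}" using D L by auto
  have \<Phi>d: "(\<lambda>\<omega>. \<Phi> \<omega> d) \<in> borel_measurable M" if "d \<in> D" for d
    using that D meas by auto
  have m1: "(\<lambda>\<omega>. SUP d\<in>D. infdist (\<Phi> \<omega> d) T) \<in> borel_measurable M"
  proof (rule borel_measurable_cSUP[OF D(1)])
    fix d assume "d \<in> D"
    then show "(\<lambda>\<omega>. infdist (\<Phi> \<omega> d) T) \<in> borel_measurable M"
      by (rule borel_measurable_continuous_on[rotated, OF \<Phi>d]) (intro continuous_intros)
  next
    fix \<omega> assume \<omega>: "\<omega> \<in> space M"
    have "bounded ((\<lambda>w. infdist (\<Phi> \<omega> w) T) ` L)"
      by (intro compact_imp_bounded compact_continuous_image continuous_intros cont \<omega> L)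
    then have "bounded ((\<lambda>w. infdist (\<Phi> \<omega> w) T) ` D)"
      by (rule bounded_subset) (use D in auto)
    then show "bdd_above ((\<lambda>d. infdist (\<Phi> \<omega> d) T) ` D)" by (rule bounded_imp_bdd_above)
  qed
  have m2: "(\<lambda>\<omega>. SUP t\<in>T. INF d\<in>D. dist t (\<Phi> \<omega> d)) \<in> borel_measurable M"
  proof (rule borel_measurable_cSUP[OF countable_finite[OF T]])
    fix t
    show "(\<lambda>\<omega>. INF d\<in>D. dist t (\<Phi> \<omega> d)) \<in> borel_measurable M"
    proof (rule borel_measurable_cINF[OF D(1)])
      fix d assume "d \<in> D"
      then show "(\<lambda>\<omega>. dist t (\<Phi> \<omega> d)) \<in> borel_measurable M"
        by (rule borel_measurable_continuous_on[rotated, OF \<Phi>d]) (intro continuous_intros)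
    qed (rule bdd_belowI[of _ 0], auto)
  qed (use T in simp)
  have "(\<lambda>\<omega>. max (SUP d\<in>D. infdist (\<Phi> \<omega> d) T) (SUP t\<in>T. INF d\<in>D. dist t (\<Phi> \<omega> d)))
        \<in> borel_measurable M"
    by (intro borel_measurable_max m1 m2)
  then show ?thesis
    by (subst measurable_cong[OF hausdorff_dist_image_eq_dense[OF L(1) D(2,3) Dne cont]]) auto
qed

lemma measurable_image_hausdorff_borel:
  fixes \<Phi> :: "'w \<Rightarrow> 'a::{metric_space,second_countable_topology} \<Rightarrow> 'b::{metric_space,second_countable_topology}"
  assumes L: "compact L" "L \<noteq> {}"
    and cont: "\<And>\<omega>. \<omega> \<in> space M \<Longrightarrow> continuous_on L (\<Phi> \<omega>)"
    and meas: "\<And>w. w \<in> L \<Longrightarrow> (\<lambda>\<omega>. \<Phi> \<omega> w) \<in> borel_measurable M"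
  shows "(\<lambda>\<omega>. \<Phi> \<omega> ` L) \<in> measurable M hausdorff_borel"
proof (rule measurable_hausdorff_borelI)
  show "\<Phi> \<omega> ` L \<in> nonempty_compacts" if "\<omega> \<in> space M" for \<omega>
    using L cont[OF that] by (auto simp: nonempty_compacts_def intro: compact_continuous_image)
qed (rule measurable_hausdorff_dist_image[OF L cont meas])

lemma borel_measurable_vec_lambda:
  fixes g :: "'m::finite \<Rightarrow> 'w \<Rightarrow> complex"
  assumes "\<And>i. g i \<in> borel_measurable M"
  shows "(\<lambda>\<omega>. \<chi> i. g i \<omega>) \<in> borel_measurable M"
proof -
  have sum: "(\<lambda>\<omega>. \<chi> i. g i \<omega>) = (\<lambda>\<omega>. \<Sum>i\<in>UNIV. axis i (g i \<omega>))"
    by (auto simp: vec_eq_iff axis_def sum.If_cases)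
  have axis: "continuous_on UNIV (\<lambda>c::complex. axis i c :: complex^'m)" for i
    by (intro linear_continuous_on bounded_linearI') (auto simp: axis_def vec_eq_iff)
  show ?thesis unfolding sum
    by (intro borel_measurable_sum borel_measurable_continuous_on[OF axis] assms)
qed

lemma measurable_vec_image_hausdorff_borel:
  fixes E :: "'m::finite \<Rightarrow> 'w \<Rightarrow> 'a::{metric_space,second_countable_topology} \<Rightarrow> complex"
  assumes L: "compact L" "L \<noteq> {}"
    and cont: "\<And>i \<omega>. \<omega> \<in> space M \<Longrightarrow> continuous_on L (E i \<omega>)"
    and meas: "\<And>i w. w \<in> L \<Longrightarrow> (\<lambda>\<omega>. E i \<omega> w) \<in> borel_measurable M"
  shows "(\<lambda>\<omega>. (\<lambda>w. \<chi> i. E i \<omega> w) ` L) \<in> measurable M hausdorff_borel"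
proof (rule measurable_image_hausdorff_borel[OF L])
  show "continuous_on L (\<lambda>w. \<chi> i. E i \<omega> w)" if "\<omega> \<in> space M" for \<omega>
    by (intro continuous_on_vec_lambda cont[OF that])
  show "(\<lambda>\<omega>. \<chi> i. E i \<omega> w) \<in> borel_measurable M" if "w \<in> L" for w
    by (intro borel_measurable_vec_lambda meas[OF that])
qed

section \<open>Characters and the spectrum of $C(K)$\<close>

context
  fixes K :: "(complex^'n) set" and A :: "(complex^'n \<Rightarrow> complex) set"
    and \<phi> :: "(complex^'n \<Rightarrow> complex) \<Rightarrow> complex"
  assumes \<phi>: "\<phi> \<in> characters K A"
begin

lemma character_cong: "f \<in> A \<Longrightarrow> g \<in> A \<Longrightarrow> (\<And>z. z \<in> K \<Longrightarrow> f z = g z) \<Longrightarrow> \<phi> f = \<phi> g"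
  using \<phi> unfolding characters_def by blast

lemma character_add: "f \<in> A \<Longrightarrow> g \<in> A \<Longrightarrow> \<phi> (\<lambda>z. f z + g z) = \<phi> f + \<phi> g"
  using \<phi> unfolding characters_def by blast

lemma character_cmult: "f \<in> A \<Longrightarrow> \<phi> (\<lambda>z. c * f z) = c * \<phi> f"
  using \<phi> unfolding characters_def by blast

lemma character_mult: "f \<in> A \<Longrightarrow> g \<in> A \<Longrightarrow> \<phi> (\<lambda>z. f z * g z) = \<phi> f * \<phi> g"
  using \<phi> unfolding characters_def by blast

lemma character_one: "\<phi> (\<lambda>z. 1) = 1"
  using \<phi> unfolding characters_def by blast

lemma character_const: "(\<lambda>z. 1) \<in> A \<Longrightarrow> \<phi> (\<lambda>z. c) = c"
  using character_cmult[of "\<lambda>z. 1" c] character_one by simp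

lemma character_add_const:
  assumes "f \<in> A" "\<And>c. (\<lambda>z. c) \<in> A"
  shows "\<phi> (\<lambda>z. f z + c) = \<phi> f + c"
  using character_add[OF assms(1,2)] character_const[OF assms(2)] by simp

lemma character_sum:
  assumes add: "\<And>f g. f \<in> A \<Longrightarrow> g \<in> A \<Longrightarrow> (\<lambda>z. f z + g z) \<in> A"
    and const: "\<And>c. (\<lambda>z. c) \<in> A"
    and "finite F" "\<And>x. x \<in> F \<Longrightarrow> w x \<in> A"
  shows "(\<lambda>y. \<Sum>x\<in>F. w x y) \<in> A \<and> \<phi> (\<lambda>y. \<Sum>x\<in>F. w x y) = (\<Sum>x\<in>F. \<phi> (w x))"
  using assms(3,4)
proof (induction F rule: finite_induct)
  case empty
  then show ?case using const character_const[OF const] by simp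
next
  case (insert x F)
  then have IH: "(\<lambda>y. \<Sum>x\<in>F. w x y) \<in> A" "\<phi> (\<lambda>y. \<Sum>x\<in>F. w x y) = (\<Sum>x\<in>F. \<phi> (w x))"
    and wx: "w x \<in> A" by auto
  show ?case using insert.hyps IH add[OF wx IH(1)] character_add[OF wx IH(1)] by simp
qed

end

lemma CK_add: "f \<in> CK K \<Longrightarrow> g \<in> CK K \<Longrightarrow> (\<lambda>z. f z + g z) \<in> CK K"
  unfolding CK_def by (simp add: continuous_on_add)

lemma CK_mult: "f \<in> CK K \<Longrightarrow> g \<in> CK K \<Longrightarrow> (\<lambda>z. f z * g z) \<in> CK K"
  unfolding CK_def by (simp add: continuous_on_mult)

lemma CK_const: "(\<lambda>z. c) \<in> CK K"
  unfolding CK_def by (simp add: continuous_on_const)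

lemma CK_cnj: "f \<in> CK K \<Longrightarrow> (\<lambda>z. cnj (f z)) \<in> CK K"
  unfolding CK_def by (simp add: continuous_on_cnj)

lemma CK_inverse: "f \<in> CK K \<Longrightarrow> (\<And>z. z \<in> K \<Longrightarrow> f z \<noteq> 0) \<Longrightarrow> (\<lambda>z. 1 / f z) \<in> CK K"
  unfolding CK_def by (simp add: continuous_on_divide continuous_on_const)

lemma character_CK_nonzero:
  assumes \<phi>: "\<phi> \<in> characters K (CK K)" and s: "s \<in> CK K" "\<And>z. z \<in> K \<Longrightarrow> s z \<noteq> 0"
  shows "\<phi> s \<noteq> 0"
proof -
  have inv: "(\<lambda>z. 1 / s z) \<in> CK K" by (rule CK_inverse[OF s])
  have "\<phi> s * \<phi> (\<lambda>z. 1 / s z) = \<phi> (\<lambda>z. s z * (1 / s z))"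
    by (rule character_mult[OF \<phi> s(1) inv, symmetric])
  also have "\<dots> = \<phi> (\<lambda>z. 1)"
    by (rule character_cong[OF \<phi> CK_mult[OF s(1) inv] CK_const]) (simp add: s(2))
  finally show ?thesis using character_one[OF \<phi>] by auto
qed

lemma sum_mult_cnj_nonzero:
  fixes u :: "'a \<Rightarrow> complex"
  assumes "finite F" "x \<in> F" "u x \<noteq> 0"
  shows "(\<Sum>z\<in>F. u z * cnj (u z)) \<noteq> 0"
proof -
  have "(\<Sum>z\<in>F. u z * cnj (u z)) = of_real (\<Sum>z\<in>F. (cmod (u z))\<^sup>2)"
    unfolding of_real_sum by (rule sum.cong) (simp_all only: complex_norm_square[symmetric] of_real_power)
  moreover have "(\<Sum>z\<in>F. (cmod (u z))\<^sup>2) \<ge> (cmod (u x))\<^sup>2"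
    by (rule member_le_sum) (use assms in auto)
  moreover have "(cmod (u x))\<^sup>2 > 0" using assms by simp
  ultimately show ?thesis by (metis of_real_eq_0_iff less_le_trans less_irrefl)
qed

text \<open>Were there no common zero, finitely many kernel elements would have none on the compact
  $K$, and the sum of their squared moduli would be a kernel element without zeros.\<close>

lemma character_CK_kernel_common_zero:
  assumes K: "compact K" and \<phi>: "\<phi> \<in> characters K (CK K)"
  shows "\<exists>z\<in>K. \<forall>u\<in>CK K. \<phi> u = 0 \<longrightarrow> u z = 0"
proof (rule ccontr)
  assume "\<not> ?thesis"
  then obtain u where u: "\<And>z. z \<in> K \<Longrightarrow> u z \<in> CK K \<and> \<phi> (u z) = 0 \<and> u z z \<noteq> 0"
    by metis
  have "\<exists>V. open V \<and> V \<inter> K = u z -` (-{0}) \<inter> K" if "z \<in> K" for z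
    using u[OF that] unfolding CK_def continuous_on_open_invariant by (simp add: open_Compl)
  then obtain V where V: "\<And>z. z \<in> K \<Longrightarrow> open (V z)"
      "\<And>z. z \<in> K \<Longrightarrow> V z \<inter> K = u z -` (-{0}) \<inter> K" by metis
  have "K \<subseteq> (\<Union>z\<in>K. V z)" using V u by blast
  then obtain F where F: "F \<subseteq> K" "finite F" "K \<subseteq> (\<Union>z\<in>F. V z)"
    using compactE_image[OF K, of K V] V(1) by metis
  define s where "s = (\<lambda>y. \<Sum>z\<in>F. u z y * cnj (u z y))"
  have uF: "u z \<in> CK K" if "z \<in> F" for z
    using u F(1) that by blast
  have "s \<in> CK K \<and> \<phi> s = (\<Sum>z\<in>F. \<phi> (\<lambda>y. u z y * cnj (u z y)))"
    unfolding s_def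
    by (rule character_sum[OF \<phi> CK_add CK_const F(2) CK_mult[OF uF CK_cnj[OF uF]]])
  moreover have "\<phi> (\<lambda>y. u z y * cnj (u z y)) = 0" if "z \<in> F" for z
    using character_mult[OF \<phi> uF[OF that] CK_cnj[OF uF[OF that]]] u F(1) that by auto
  moreover have "s y \<noteq> 0" if "y \<in> K" for y
  proof -
    obtain z where z: "z \<in> F" "y \<in> V z" using F(3) \<open>y \<in> K\<close> by blast
    then have "u z y \<noteq> 0" using V(2)[of z] F(1) that by auto
    then show ?thesis unfolding s_def by (rule sum_mult_cnj_nonzero[OF F(2) z(1)])
  qed
  ultimately show False using character_CK_nonzero[OF \<phi>] by auto
qed

lemma character_CK_eq_eval:
  assumes K: "compact K" and \<phi>: "\<phi> \<in> characters K (CK K)"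
  shows "\<exists>z\<in>K. \<forall>g\<in>CK K. \<phi> g = g z"
proof -
  obtain z where z: "z \<in> K" "\<And>u. u \<in> CK K \<Longrightarrow> \<phi> u = 0 \<Longrightarrow> u z = 0"
    using character_CK_kernel_common_zero[OF assms] by blast
  have "\<phi> g = g z" if g: "g \<in> CK K" for g
  proof -
    have "\<phi> (\<lambda>y. g y + - \<phi> g) = 0"
      by (simp only: character_add_const[OF \<phi> g CK_const]) simp
    then show ?thesis using z(2)[OF CK_add[OF g CK_const, of "- \<phi> g"]] by simp
  qed
  with z(1) show ?thesis by blast
qed

lemma CK_joint_spectrum:
  fixes h :: "'m::finite \<Rightarrow> complex^'n \<Rightarrow> complex"
  assumes K: "compact K" and h: "\<And>i. h i \<in> CK K"
  shows "joint_spectrum K (CK K) h = (\<lambda>z. \<chi> i. h i z) ` K"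
proof (intro equalityI subsetI)
  fix x assume "x \<in> joint_spectrum K (CK K) h"
  then obtain \<phi> where \<phi>: "\<phi> \<in> characters K (CK K)" "x = (\<chi> i. \<phi> (h i))"
    by (auto simp: joint_spectrum_def)
  obtain z where "z \<in> K" "\<forall>g\<in>CK K. \<phi> g = g z" using character_CK_eq_eval[OF K \<phi>(1)] by blast
  then show "x \<in> (\<lambda>z. \<chi> i. h i z) ` K" using \<phi>(2) h by auto
next
  fix x assume "x \<in> (\<lambda>z. \<chi> i. h i z) ` K"
  then obtain z where z: "z \<in> K" "x = (\<chi> i. h i z)" by auto
  have "(\<lambda>g. g z) \<in> characters K (CK K)" using z(1) by (simp add: characters_def)
  then show "x \<in> joint_spectrum K (CK K) h" using z(2) by (auto simp: joint_spectrum_def)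
qed

lemma continuous_on_polyfun: "p \<in> polyfun \<Longrightarrow> continuous_on S p"
  by (induction rule: polyfun.induct)
     (auto intro!: continuous_on_add continuous_on_mult continuous_on_const continuous_on_component continuous_on_id)

lemma polyfun_cmult: "p \<in> polyfun \<Longrightarrow> (\<lambda>z. c * p z) \<in> polyfun"
  using polyfun.mult[OF polyfun.const] by blast

lemma polyfun_diff: "p \<in> polyfun \<Longrightarrow> q \<in> polyfun \<Longrightarrow> (\<lambda>z. p z - q z) \<in> polyfun"
  using polyfun.add[OF _ polyfun_cmult[of q "-1"]] by simp

lemma PK_iff: "f \<in> PK K \<longleftrightarrow> (\<exists>p. (\<forall>k. p k \<in> polyfun) \<and> uniform_limit K p f sequentially)"
  unfolding PK_def uniform_limit_sequentially_iff dist_norm by auto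

lemma continuous_on_PK:
  assumes "f \<in> PK K"
  shows "continuous_on K f"
proof -
  obtain p where p: "\<forall>k. p k \<in> polyfun" "uniform_limit K p f sequentially"
    using assms unfolding PK_iff by blast
  show ?thesis
    by (rule uniform_limit_theorem[OF _ p(2)]) (use p(1) continuous_on_polyfun in \<open>auto intro: always_eventually\<close>)
qed

lemma bounded_PK: "compact K \<Longrightarrow> f \<in> PK K \<Longrightarrow> bounded (f ` K)"
  by (intro compact_imp_bounded compact_continuous_image continuous_on_PK)

lemma polyfun_in_PK: "p \<in> polyfun \<Longrightarrow> p \<in> PK K"
  unfolding PK_iff by (intro exI[of _ "\<lambda>k. p"]) (auto intro: uniform_limit_const)

lemma PK_const: "(\<lambda>z. c) \<in> PK K"
  by (intro polyfun_in_PK polyfun.const)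

lemma PK_add:
  assumes "f \<in> PK K" "g \<in> PK K"
  shows "(\<lambda>z. f z + g z) \<in> PK K"
proof -
  from assms obtain p q where "\<forall>k. p k \<in> polyfun" "uniform_limit K p f sequentially"
    "\<forall>k. q k \<in> polyfun" "uniform_limit K q g sequentially" unfolding PK_iff by blast
  then show ?thesis unfolding PK_iff
    by (intro exI[of _ "\<lambda>k z. p k z + q k z"]) (auto intro: polyfun.add uniform_limit_add)
qed

lemma PK_mult:
  assumes K: "compact K" and f: "f \<in> PK K" and g: "g \<in> PK K"
  shows "(\<lambda>z. f z * g z) \<in> PK K"
proof -
  from f g obtain p q where "\<forall>k. p k \<in> polyfun" "uniform_limit K p f sequentially"
    "\<forall>k. q k \<in> polyfun" "uniform_limit K q g sequentially" unfolding PK_iff by blast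
  then show ?thesis unfolding PK_iff
    by (intro exI[of _ "\<lambda>k z. p k z * q k z"])
       (auto intro: polyfun.mult uniform_lim_mult bounded_PK[OF K f] bounded_PK[OF K g])
qed

lemma PK_cmult:
  assumes "f \<in> PK K"
  shows "(\<lambda>z. c * f z) \<in> PK K"
proof -
  from assms obtain p where "\<forall>k. p k \<in> polyfun" "uniform_limit K p f sequentially"
    unfolding PK_iff by blast
  then show ?thesis unfolding PK_iff
    by (intro exI[of _ "\<lambda>k z. c * p k z"])
       (auto intro: polyfun_cmult bounded_linear.uniform_limit[OF bounded_linear_mult_right])
qed

lemma PK_diff: "f \<in> PK K \<Longrightarrow> g \<in> PK K \<Longrightarrow> (\<lambda>z. f z - g z) \<in> PK K"
  using PK_add[OF _ PK_cmult[of g K "-1"]] by simp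

lemma PK_power: "compact K \<Longrightarrow> f \<in> PK K \<Longrightarrow> (\<lambda>z. (f z) ^ i) \<in> PK K"
  by (induction i) (simp_all add: PK_mult PK_const)

lemma PK_sum: "(\<And>i. t i \<in> PK K) \<Longrightarrow> (\<lambda>z. \<Sum>i<(n::nat). t i z) \<in> PK K"
  by (induction n) (simp_all add: PK_add PK_const)

lemma PK_uniform_limit:
  assumes g: "\<And>k. g k \<in> PK K" and ul: "uniform_limit K g f sequentially"
  shows "f \<in> PK K"
proof -
  have "\<exists>q. q \<in> polyfun \<and> (\<forall>z\<in>K. dist (q z) (g k z) < 1 / Suc k)" for k
  proof -
    obtain p where p: "\<forall>j. p j \<in> polyfun" "uniform_limit K p (g k) sequentially"
      using g[of k] unfolding PK_iff by blast
    obtain N where "\<forall>n\<ge>N. \<forall>z\<in>K. dist (p n z) (g k z) < 1 / Suc k"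
      using p(2) unfolding uniform_limit_sequentially_iff by (meson of_nat_0_less_iff zero_less_Suc divide_pos_pos zero_less_one)
    then show ?thesis using p(1) by blast
  qed
  then obtain q where q: "\<And>k. q k \<in> polyfun" "\<And>k z. z \<in> K \<Longrightarrow> dist (q k z) (g k z) < 1 / Suc k"
    by metis
  have "uniform_limit K q f sequentially"
    unfolding uniform_limit_sequentially_iff
  proof (intro allI impI)
    fix e :: real assume e: "e > 0"
    obtain N1 where N1: "\<forall>n\<ge>N1. \<forall>z\<in>K. dist (g n z) (f z) < e/2"
      using ul e unfolding uniform_limit_sequentially_iff by (meson half_gt_zero)
    obtain N2 :: nat where N2: "1 / Suc N2 < e/2"
      using reals_Archimedean[of "e/2"] e by (auto simp: inverse_eq_divide)
    show "\<exists>N. \<forall>n\<ge>N. \<forall>z\<in>K. dist (q n z) (f z) < e"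
    proof (intro exI allI impI ballI)
      fix n z assume n: "max N1 N2 \<le> n" and z: "z \<in> K"
      have "1 / real (Suc n) \<le> 1 / Suc N2" using n by (intro divide_left_mono) auto
      then have "dist (q n z) (g n z) < e/2" using q(2)[OF z, of n] N2 by linarith
      moreover have "dist (g n z) (f z) < e/2" using N1 n z by auto
      ultimately show "dist (q n z) (f z) < e" using dist_triangle[of "q n z" "f z" "g n z"] by linarith
    qed
  qed
  then show ?thesis unfolding PK_iff using q(1) by blast
qed

text \<open>Neumann series: $1/(l - f) = \sum_i l^{-1} (f/l)^i$ converges uniformly on $K$.\<close>

lemma PK_inverse:
  assumes K: "compact K" and f: "f \<in> PK K"
    and B: "0 \<le> B" "B < cmod l" "\<And>z. z \<in> K \<Longrightarrow> cmod (f z) \<le> B"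
  obtains g where "g \<in> PK K" "\<And>z. z \<in> K \<Longrightarrow> (l - f z) * g z = 1"
proof -
  have l: "cmod l > 0" using B by linarith
  define r where "r = B / cmod l"
  have r: "r \<ge> 0" "r < 1" using B l by (auto simp: r_def field_simps)
  define t where "t i z = inverse l * (inverse l * f z) ^ i" for i z
  have cb: "cmod (inverse l * f z) \<le> r" if "z \<in> K" for z
  proof -
    have "cmod (inverse l * f z) = cmod (f z) / cmod l"
      by (simp add: norm_mult norm_inverse divide_inverse mult.commute)
    also have "\<dots> \<le> r" unfolding r_def using B(3)[OF that] l by (intro divide_right_mono) auto
    finally show ?thesis .
  qed
  have "norm (t i z) \<le> inverse (cmod l) * r ^ i" if "z \<in> K" for i z
    unfolding t_def norm_mult norm_power norm_inverse
    by (intro mult_left_mono power_mono) (use cb[OF that] in \<open>auto simp: norm_mult norm_inverse\<close>)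
  moreover have "summable (\<lambda>i. inverse (cmod l) * r ^ i)"
    using r by (intro summable_mult summable_geometric) auto
  ultimately have "uniform_limit K (\<lambda>n z. \<Sum>i<n. t i z) (\<lambda>z. \<Sum>i. t i z) sequentially"
    by (rule Weierstrass_m_test)
  then have "(\<lambda>z. \<Sum>i. t i z) \<in> PK K"
    by (rule PK_uniform_limit[rotated]) (unfold t_def, intro PK_sum PK_cmult PK_power[OF K] f)
  moreover have "(l - f z) * (\<Sum>i. t i z) = 1" if z: "z \<in> K" for z
  proof -
    have "norm (inverse l * f z) < 1" using cb[OF z] r by linarith
    then have "(\<lambda>i. t i z) sums (inverse l * (1 / (1 - inverse l * f z)))"
      unfolding t_def by (intro sums_mult geometric_sums)
    moreover have "l - f z \<noteq> 0" using B(2) B(3)[OF z] by auto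
    ultimately show ?thesis using l by (simp add: sums_iff field_simps)
  qed
  ultimately show ?thesis using that by blast
qed

lemma character_PK_norm_le:
  assumes K: "compact K" "K \<noteq> {}" and \<phi>: "\<phi> \<in> characters K (PK K)"
    and f: "f \<in> PK K" and B: "\<And>z. z \<in> K \<Longrightarrow> cmod (f z) \<le> B"
  shows "cmod (\<phi> f) \<le> B"
proof (rule ccontr)
  assume "\<not> cmod (\<phi> f) \<le> B"
  moreover have "0 \<le> B" using K(2) B by (meson all_not_in_conv norm_ge_zero order_trans)
  ultimately obtain g where g: "g \<in> PK K" "\<And>z. z \<in> K \<Longrightarrow> (\<phi> f - f z) * g z = 1"
    using PK_inverse[OF K(1) f, of B "\<phi> f"] B by (metis not_le)
  have lf: "(\<lambda>z. \<phi> f - f z) \<in> PK K" by (rule PK_diff[OF PK_const f])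
  have "\<phi> (\<lambda>z. \<phi> f - f z) = 0"
    using character_add[OF \<phi> PK_const PK_cmult[OF f, of "-1"]] character_cmult[OF \<phi> f, of "-1"]
      character_const[OF \<phi> PK_const] by simp
  moreover have "\<phi> (\<lambda>z. \<phi> f - f z) * \<phi> g = 1"
    using character_mult[OF \<phi> lf g(1)] character_cong[OF \<phi> PK_mult[OF K(1) lf g(1)] PK_const]
      character_one[OF \<phi>] g(2) by simp
  ultimately show False by simp
qed

lemma character_PK_dist_le:
  assumes K: "compact K" "K \<noteq> {}" and \<phi>: "\<phi> \<in> characters K (PK K)"
    and f: "f \<in> PK K" and g: "g \<in> PK K" and B: "\<And>z. z \<in> K \<Longrightarrow> cmod (f z - g z) \<le> B"
  shows "cmod (\<phi> f - \<phi> g) \<le> B"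
proof -
  have "\<phi> (\<lambda>z. f z - g z) = \<phi> f - \<phi> g"
    using character_add[OF \<phi> f PK_cmult[OF g, of "-1"]] character_cmult[OF \<phi> g, of "-1"] by simp
  then show ?thesis using character_PK_norm_le[OF K \<phi> PK_diff[OF f g] B] by simp
qed

lemma character_polyfun:
  assumes \<phi>: "\<phi> \<in> characters K (PK K)" and p: "p \<in> polyfun"
  shows "\<phi> p = p (\<chi> j. \<phi> (\<lambda>z. z $ j))"
  using p
proof (induction rule: polyfun.induct)
  case (const c)
  show ?case by (rule character_const[OF \<phi> PK_const])
next
  case (coord i)
  show ?case by simp
next
  case (add p q)
  then show ?case using character_add[OF \<phi> polyfun_in_PK polyfun_in_PK] by simp
next
  case (mult p q)
  then show ?case using character_mult[OF \<phi> polyfun_in_PK polyfun_in_PK] by simp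
qed

section \<open>The polynomial hull and the spectrum of $P(K)$\<close>

definition poly_hull :: "(complex^'n) set \<Rightarrow> (complex^'n) set" where
  "poly_hull K = {w. \<forall>p\<in>polyfun. \<forall>B. (\<forall>z\<in>K. cmod (p z) \<le> B) \<longrightarrow> cmod (p w) \<le> B}"

definition PK_approx :: "(complex^'n) set \<Rightarrow> (complex^'n \<Rightarrow> complex) \<Rightarrow> nat \<Rightarrow> complex^'n \<Rightarrow> complex" where
  "PK_approx K f = (SOME p. (\<forall>k. p k \<in> polyfun) \<and> uniform_limit K p f sequentially)"

text \<open>Every polynomial sequence converging uniformly on $K$ converges on the polynomial hull
  (see \<open>hull_ext_tendsto\<close>), so this is the continuous extension of $f \in P(K)$ to the hull.\<close>

definition hull_ext :: "(complex^'n) set \<Rightarrow> (complex^'n \<Rightarrow> complex) \<Rightarrow> complex^'n \<Rightarrow> complex" where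
  "hull_ext K f w = lim (\<lambda>k. PK_approx K f k w)"

lemma poly_hull_bound:
  "w \<in> poly_hull K \<Longrightarrow> p \<in> polyfun \<Longrightarrow> (\<And>z. z \<in> K \<Longrightarrow> cmod (p z) \<le> B) \<Longrightarrow> cmod (p w) \<le> B"
  unfolding poly_hull_def by blast

lemma subset_poly_hull: "K \<subseteq> poly_hull K"
  unfolding poly_hull_def by auto

lemma compact_poly_hull:
  fixes K :: "(complex^'n) set"
  assumes K: "compact K"
  shows "compact (poly_hull K)"
proof -
  have "poly_hull K =
      (\<Inter>(p, B)\<in>{(p, B). p \<in> polyfun \<and> (\<forall>z\<in>K. cmod (p z) \<le> B)}. {w. cmod (p w) \<le> B})"
    unfolding poly_hull_def by auto
  moreover have "closed {w. cmod (p w) \<le> B}" if "p \<in> polyfun" for p :: "complex^'n \<Rightarrow> complex" and B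
    by (intro closed_Collect_le continuous_on_norm continuous_on_const continuous_on_polyfun that)
  then have "closed (\<Inter>(p, B)\<in>{(p, B). p \<in> polyfun \<and> (\<forall>z\<in>K. cmod (p z) \<le> B)}. {w. cmod (p w) \<le> B})"
    by (intro closed_INT) auto
  ultimately have closed: "closed (poly_hull K)" by simp
  obtain R where R: "\<And>z. z \<in> K \<Longrightarrow> norm z \<le> R"
    using compact_imp_bounded[OF K] unfolding bounded_iff by blast
  have "norm w \<le> (\<Sum>i::'n\<in>UNIV. R)" if w: "w \<in> poly_hull K" for w
  proof -
    have wi: "cmod (w $ i) \<le> R" for i
      using R by (intro poly_hull_bound[OF w polyfun.coord]) (blast intro: order_trans[OF Finite_Cartesian_Product.norm_nth_le])
    have "norm w \<le> (\<Sum>i\<in>UNIV. norm (w $ i))" unfolding norm_vec_def by (rule L2_set_le_sum) simp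
    also have "\<dots> \<le> (\<Sum>i::'n\<in>UNIV. R)" by (intro sum_mono wi)
    finally show ?thesis .
  qed
  then have "bounded (poly_hull K)" unfolding bounded_iff by blast
  with closed show ?thesis by (simp add: compact_eq_bounded_closed)
qed

lemma PK_approx:
  assumes "f \<in> PK K"
  shows "\<forall>k. PK_approx K f k \<in> polyfun" "uniform_limit K (PK_approx K f) f sequentially"
proof -
  have "\<exists>p. (\<forall>k. p k \<in> polyfun) \<and> uniform_limit K p f sequentially"
    using assms unfolding PK_iff .
  then have "(\<forall>k. PK_approx K f k \<in> polyfun) \<and> uniform_limit K (PK_approx K f) f sequentially"
    unfolding PK_approx_def by (rule someI_ex)
  then show "\<forall>k. PK_approx K f k \<in> polyfun" "uniform_limit K (PK_approx K f) f sequentially"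
    by auto
qed

lemma PK_approx_close:
  assumes "f \<in> PK K" "e > 0"
  shows "\<exists>N. \<forall>n\<ge>N. \<forall>z\<in>K. cmod (PK_approx K f n z - f z) < e"
  using PK_approx(2)[OF assms(1)] assms(2)
  unfolding uniform_limit_sequentially_iff dist_norm by blast

lemma polyfun_seq_close_on_hull:
  assumes p: "\<forall>k. p k \<in> polyfun" "uniform_limit K p f sequentially"
    and q: "\<forall>k. q k \<in> polyfun" "uniform_limit K q g sequentially"
    and w: "w \<in> poly_hull K"
    and fg: "\<And>z. z \<in> K \<Longrightarrow> cmod (f z - g z) \<le> B" and e: "e > 0"
  shows "\<exists>N. \<forall>m\<ge>N. \<forall>n\<ge>N. cmod (p m w - q n w) \<le> B + e"
proof -
  obtain N1 where N1: "\<forall>n\<ge>N1. \<forall>z\<in>K. dist (p n z) (f z) < e/2"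
    using p(2) half_gt_zero[OF e] unfolding uniform_limit_sequentially_iff by blast
  obtain N2 where N2: "\<forall>n\<ge>N2. \<forall>z\<in>K. dist (q n z) (g z) < e/2"
    using q(2) half_gt_zero[OF e] unfolding uniform_limit_sequentially_iff by blast
  show ?thesis
  proof (intro exI allI impI)
    fix m n assume m: "max N1 N2 \<le> m" and n: "max N1 N2 \<le> n"
    show "cmod (p m w - q n w) \<le> B + e"
    proof (rule poly_hull_bound[OF w polyfun_diff])
      show "p m \<in> polyfun" "q n \<in> polyfun" using p q by auto
      fix z assume z: "z \<in> K"
      have "cmod (p m z - q n z) \<le> cmod (p m z - f z) + cmod (f z - g z) + cmod (g z - q n z)"
        using norm_triangle_ineq[of "p m z - f z" "f z - g z"]
          norm_triangle_ineq[of "(p m z - f z) + (f z - g z)" "g z - q n z"] by simp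
      moreover have "cmod (p m z - f z) < e/2" using N1 m z by (simp add: dist_norm)
      moreover have "cmod (g z - q n z) < e/2" using N2 n z by (simp add: dist_norm norm_minus_commute)
      ultimately show "cmod (p m z - q n z) \<le> B + e" using fg[OF z] by linarith
    qed
  qed
qed

lemma hull_ext_tendsto:
  assumes f: "f \<in> PK K" and p: "\<forall>k. p k \<in> polyfun" "uniform_limit K p f sequentially"
    and w: "w \<in> poly_hull K"
  shows "(\<lambda>k. p k w) \<longlonglongrightarrow> hull_ext K f w"
proof -
  have "Cauchy (\<lambda>k. PK_approx K f k w)"
  proof (rule metric_CauchyI)
    fix e :: real assume "e > 0"
    then obtain N where N: "\<forall>m\<ge>N. \<forall>n\<ge>N. cmod (PK_approx K f m w - PK_approx K f n w) \<le> 0 + e/2"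
      using polyfun_seq_close_on_hull[OF PK_approx[OF f] PK_approx[OF f] w, of 0 "e/2"] by auto
    show "\<exists>M. \<forall>m\<ge>M. \<forall>n\<ge>M. dist (PK_approx K f m w) (PK_approx K f n w) < e"
    proof (intro exI[of _ N] allI impI)
      fix m n assume "N \<le> m" "N \<le> n"
      with N have "cmod (PK_approx K f m w - PK_approx K f n w) \<le> e/2" by simp
      with \<open>e > 0\<close> show "dist (PK_approx K f m w) (PK_approx K f n w) < e"
        by (simp add: dist_norm)
    qed
  qed
  then have a: "(\<lambda>k. PK_approx K f k w) \<longlonglongrightarrow> hull_ext K f w"
    unfolding hull_ext_def by (simp add: Cauchy_convergent_iff convergent_LIMSEQ_iff)
  have "(\<lambda>k. p k w - PK_approx K f k w) \<longlonglongrightarrow> 0"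
    unfolding LIMSEQ_iff
  proof (intro allI impI)
    fix e :: real assume "e > 0"
    then obtain N where N: "\<forall>m\<ge>N. \<forall>n\<ge>N. cmod (p m w - PK_approx K f n w) \<le> 0 + e/2"
      using polyfun_seq_close_on_hull[OF p PK_approx[OF f] w, of 0 "e/2"] by auto
    show "\<exists>N. \<forall>n\<ge>N. norm (p n w - PK_approx K f n w - 0) < e"
    proof (intro exI[of _ N] allI impI)
      fix n assume "N \<le> n"
      with N have "cmod (p n w - PK_approx K f n w) \<le> e/2" by simp
      with \<open>e > 0\<close> show "norm (p n w - PK_approx K f n w - 0) < e" by simp
    qed
  qed
  from tendsto_add[OF this a] show ?thesis by simp
qed

lemma hull_ext_dist_le:
  assumes f: "f \<in> PK K" and g: "g \<in> PK K" and w: "w \<in> poly_hull K"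
    and fg: "\<And>z. z \<in> K \<Longrightarrow> cmod (f z - g z) \<le> B"
  shows "cmod (hull_ext K f w - hull_ext K g w) \<le> B"
proof (rule field_le_epsilon)
  fix e :: real assume e: "e > 0"
  have "(\<lambda>k. cmod (PK_approx K f k w - PK_approx K g k w)) \<longlonglongrightarrow> cmod (hull_ext K f w - hull_ext K g w)"
    by (intro tendsto_norm tendsto_diff hull_ext_tendsto[OF f PK_approx[OF f] w]
        hull_ext_tendsto[OF g PK_approx[OF g] w])
  moreover obtain N where "\<forall>m\<ge>N. \<forall>n\<ge>N. cmod (PK_approx K f m w - PK_approx K g n w) \<le> B + e"
    using polyfun_seq_close_on_hull[OF PK_approx[OF f] PK_approx[OF g] w fg e] by blast
  then have "\<exists>N. \<forall>n\<ge>N. cmod (PK_approx K f n w - PK_approx K g n w) \<le> B + e" by blast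
  ultimately show "cmod (hull_ext K f w - hull_ext K g w) \<le> B + e"
    by (rule LIMSEQ_le_const2)
qed

lemma hull_ext_polyfun:
  assumes p: "p \<in> polyfun" and w: "w \<in> poly_hull K"
  shows "hull_ext K p w = p w"
proof -
  have "(\<lambda>k. p w) \<longlonglongrightarrow> hull_ext K p w"
    by (rule hull_ext_tendsto[OF polyfun_in_PK[OF p] _ uniform_limit_const w]) (use p in auto)
  then show ?thesis by (simp add: LIMSEQ_const_iff)
qed

lemma hull_ext_add:
  assumes f: "f \<in> PK K" and g: "g \<in> PK K" and w: "w \<in> poly_hull K"
  shows "hull_ext K (\<lambda>z. f z + g z) w = hull_ext K f w + hull_ext K g w"
proof (rule LIMSEQ_unique)
  show "(\<lambda>k. PK_approx K f k w + PK_approx K g k w) \<longlonglongrightarrow> hull_ext K (\<lambda>z. f z + g z) w"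
  proof (rule hull_ext_tendsto[OF PK_add[OF f g] _ _ w, where p="\<lambda>k z. PK_approx K f k z + PK_approx K g k z", simplified])
    show "\<forall>k. (\<lambda>z. PK_approx K f k z + PK_approx K g k z) \<in> polyfun"
      using PK_approx(1)[OF f] PK_approx(1)[OF g] by (auto intro: polyfun.add)
    show "uniform_limit K (\<lambda>k z. PK_approx K f k z + PK_approx K g k z) (\<lambda>z. f z + g z) sequentially"
      by (intro uniform_limit_add PK_approx(2) f g)
  qed
  show "(\<lambda>k. PK_approx K f k w + PK_approx K g k w) \<longlonglongrightarrow> hull_ext K f w + hull_ext K g w"
    by (intro tendsto_add hull_ext_tendsto[OF f PK_approx[OF f] w] hull_ext_tendsto[OF g PK_approx[OF g] w])
qed

lemma hull_ext_mult:
  assumes K: "compact K" and f: "f \<in> PK K" and g: "g \<in> PK K" and w: "w \<in> poly_hull K"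
  shows "hull_ext K (\<lambda>z. f z * g z) w = hull_ext K f w * hull_ext K g w"
proof (rule LIMSEQ_unique)
  show "(\<lambda>k. PK_approx K f k w * PK_approx K g k w) \<longlonglongrightarrow> hull_ext K (\<lambda>z. f z * g z) w"
  proof (rule hull_ext_tendsto[OF PK_mult[OF K f g] _ _ w, where p="\<lambda>k z. PK_approx K f k z * PK_approx K g k z", simplified])
    show "\<forall>k. (\<lambda>z. PK_approx K f k z * PK_approx K g k z) \<in> polyfun"
      using PK_approx(1)[OF f] PK_approx(1)[OF g] by (auto intro: polyfun.mult)
    show "uniform_limit K (\<lambda>k z. PK_approx K f k z * PK_approx K g k z) (\<lambda>z. f z * g z) sequentially"
      by (intro uniform_lim_mult PK_approx(2) f g bounded_PK[OF K f] bounded_PK[OF K g])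
  qed
  show "(\<lambda>k. PK_approx K f k w * PK_approx K g k w) \<longlonglongrightarrow> hull_ext K f w * hull_ext K g w"
    by (intro tendsto_mult hull_ext_tendsto[OF f PK_approx[OF f] w] hull_ext_tendsto[OF g PK_approx[OF g] w])
qed

lemma character_hull_ext:
  assumes K: "compact K" and w: "w \<in> poly_hull K"
  shows "(\<lambda>g. hull_ext K g w) \<in> characters K (PK K)"
  unfolding characters_def
proof (intro CollectI conjI ballI allI impI)
  fix f g assume f: "f \<in> PK K" and g: "g \<in> PK K" and "\<forall>z\<in>K. f z = g z"
  then have "cmod (hull_ext K f w - hull_ext K g w) \<le> 0"
    by (intro hull_ext_dist_le[OF f g w]) auto
  then show "hull_ext K f w = hull_ext K g w" by simp
next
  fix f g assume f: "f \<in> PK K" and g: "g \<in> PK K"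
  show "hull_ext K (\<lambda>z. f z + g z) w = hull_ext K f w + hull_ext K g w" by (rule hull_ext_add[OF f g w])
  show "hull_ext K (\<lambda>z. f z * g z) w = hull_ext K f w * hull_ext K g w" by (rule hull_ext_mult[OF K f g w])
next
  fix f c assume f: "f \<in> PK K"
  show "hull_ext K (\<lambda>z. c * f z) w = c * hull_ext K f w"
    using hull_ext_mult[OF K PK_const f w, of c] hull_ext_polyfun[OF polyfun.const w, of c] by simp
next
  show "hull_ext K (\<lambda>z. 1) w = 1" using hull_ext_polyfun[OF polyfun.const w] by simp
qed

lemma character_point_in_poly_hull:
  assumes K: "compact K" "K \<noteq> {}" and \<phi>: "\<phi> \<in> characters K (PK K)"
  shows "(\<chi> j. \<phi> (\<lambda>z. z $ j)) \<in> poly_hull K"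
  unfolding poly_hull_def
proof (intro CollectI ballI allI impI)
  fix p B assume p: "p \<in> polyfun" and "\<forall>z\<in>K. cmod (p z) \<le> B"
  then have "cmod (\<phi> p) \<le> B" by (intro character_PK_norm_le[OF K \<phi> polyfun_in_PK]) auto
  then show "cmod (p (\<chi> j. \<phi> (\<lambda>z. z $ j))) \<le> B" using character_polyfun[OF \<phi> p] by simp
qed

lemma character_PK_eq_hull_ext:
  assumes K: "compact K" "K \<noteq> {}" and \<phi>: "\<phi> \<in> characters K (PK K)" and f: "f \<in> PK K"
  shows "\<phi> f = hull_ext K f (\<chi> j. \<phi> (\<lambda>z. z $ j))"
proof (rule LIMSEQ_unique)
  define w where "w = (\<chi> j. \<phi> (\<lambda>z. z $ j))"
  show "(\<lambda>k. PK_approx K f k w) \<longlonglongrightarrow> hull_ext K f w"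
    by (rule hull_ext_tendsto[OF f PK_approx[OF f] character_point_in_poly_hull[OF K \<phi>, folded w_def]])
  show "(\<lambda>k. PK_approx K f k w) \<longlonglongrightarrow> \<phi> f"
    unfolding LIMSEQ_iff
  proof (intro allI impI)
    fix e :: real assume "e > 0"
    then obtain N where N: "\<forall>n\<ge>N. \<forall>z\<in>K. cmod (PK_approx K f n z - f z) < e/2"
      using PK_approx_close[OF f, of "e/2"] by auto
    have "cmod (PK_approx K f n w - \<phi> f) \<le> e/2" if "N \<le> n" for n
    proof -
      have p: "PK_approx K f n \<in> polyfun" using PK_approx(1)[OF f] by blast
      have "cmod (\<phi> (PK_approx K f n) - \<phi> f) \<le> e/2"
        using N that by (intro character_PK_dist_le[OF K \<phi> polyfun_in_PK[OF p] f]) (auto intro: less_imp_le)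
      then show ?thesis using character_polyfun[OF \<phi> p] by (simp add: w_def)
    qed
    moreover have "e/2 < e" using \<open>e > 0\<close> by simp
    ultimately show "\<exists>N. \<forall>n\<ge>N. norm (PK_approx K f n w - \<phi> f) < e"
      by (intro exI[of _ N] allI impI) (meson le_less_trans)
  qed
qed

lemma continuous_on_hull_ext:
  assumes f: "f \<in> PK K"
  shows "continuous_on (poly_hull K) (hull_ext K f)"
proof (rule uniform_limit_theorem)
  show "\<forall>\<^sub>F n in sequentially. continuous_on (poly_hull K) (PK_approx K f n)"
    using PK_approx(1)[OF f] by (auto intro: always_eventually continuous_on_polyfun)
  show "uniform_limit (poly_hull K) (PK_approx K f) (hull_ext K f) sequentially"
    unfolding uniform_limit_sequentially_iff
  proof (intro allI impI)
    fix e :: real assume "e > 0"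
    then obtain N where N: "\<forall>n\<ge>N. \<forall>z\<in>K. cmod (PK_approx K f n z - f z) < e/2"
      using PK_approx_close[OF f, of "e/2"] by auto
    have "dist (PK_approx K f n w) (hull_ext K f w) \<le> e/2" if "N \<le> n" "w \<in> poly_hull K" for n w
    proof -
      have p: "PK_approx K f n \<in> polyfun" using PK_approx(1)[OF f] by blast
      have "cmod (hull_ext K (PK_approx K f n) w - hull_ext K f w) \<le> e/2"
        using N that by (intro hull_ext_dist_le[OF polyfun_in_PK[OF p] f that(2)]) (auto intro: less_imp_le)
      then show ?thesis using hull_ext_polyfun[OF p that(2)] by (simp add: dist_norm)
    qed
    moreover have "e/2 < e" using \<open>e > 0\<close> by simp
    ultimately show "\<exists>N. \<forall>n\<ge>N. \<forall>w\<in>poly_hull K. dist (PK_approx K f n w) (hull_ext K f w) < e"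
      by (intro exI[of _ N] allI impI ballI) (meson le_less_trans)
  qed
qed simp

lemma PK_joint_spectrum:
  fixes h :: "'m::finite \<Rightarrow> complex^'n \<Rightarrow> complex"
  assumes K: "compact K" "K \<noteq> {}" and h: "\<And>i. h i \<in> PK K"
  shows "joint_spectrum K (PK K) h = (\<lambda>w. \<chi> i. hull_ext K (h i) w) ` poly_hull K"
proof (intro equalityI subsetI)
  fix x assume "x \<in> joint_spectrum K (PK K) h"
  then obtain \<phi> where \<phi>: "\<phi> \<in> characters K (PK K)" "x = (\<chi> i. \<phi> (h i))"
    by (auto simp: joint_spectrum_def)
  then show "x \<in> (\<lambda>w. \<chi> i. hull_ext K (h i) w) ` poly_hull K"
    using character_point_in_poly_hull[OF K \<phi>(1)] character_PK_eq_hull_ext[OF K \<phi>(1) h] by auto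
next
  fix x assume "x \<in> (\<lambda>w. \<chi> i. hull_ext K (h i) w) ` poly_hull K"
  then obtain w where "w \<in> poly_hull K" "x = (\<chi> i. hull_ext K (h i) w)" by auto
  with character_hull_ext[OF K(1)] show "x \<in> joint_spectrum K (PK K) h"
    by (auto simp: joint_spectrum_def)
qed

section \<open>Measurability of the extension to the polynomial hull\<close>

definition rat_complex :: "complex set" where
  "rat_complex = (\<lambda>(a, b). Complex a b) ` (\<rat> \<times> \<rat>)"

lemma countable_rat_complex: "countable rat_complex"
  unfolding rat_complex_def by (intro countable_image countable_SIGMA countable_rat)

lemma rat_complex_dense:
  assumes "e > 0"
  shows "\<exists>c'\<in>rat_complex. cmod (c - c') < e"
proof -
  obtain a where a: "a \<in> \<rat>" "Re c - e/2 < a" "a < Re c"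
    using Rats_dense_in_real[of "Re c - e/2" "Re c"] assms by auto
  obtain b where b: "b \<in> \<rat>" "Im c - e/2 < b" "b < Im c"
    using Rats_dense_in_real[of "Im c - e/2" "Im c"] assms by auto
  have "cmod (c - Complex a b) \<le> \<bar>Re (c - Complex a b)\<bar> + \<bar>Im (c - Complex a b)\<bar>" by (rule cmod_le)
  also have "\<dots> < e" using a b by simp
  finally show ?thesis using a b by (auto simp: rat_complex_def)
qed

text \<open>Polynomials with coefficients in $\mathbb{Q} + i\mathbb{Q}$, stratified by the depth of
  the expression so that countability is evident.\<close>

fun rat_poly_level :: "nat \<Rightarrow> (complex^'n \<Rightarrow> complex) set" where
  "rat_poly_level 0 = (\<lambda>c z. c) ` rat_complex \<union> range (\<lambda>i z. z $ i)"
| "rat_poly_level (Suc k) = rat_poly_level k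
     \<union> (\<lambda>(p, q) z. p z + q z) ` (rat_poly_level k \<times> rat_poly_level k)
     \<union> (\<lambda>(p, q) z. p z * q z) ` (rat_poly_level k \<times> rat_poly_level k)"

definition rat_polyfun :: "(complex^'n \<Rightarrow> complex) set" where
  "rat_polyfun = (\<Union>k. rat_poly_level k)"

lemma countable_rat_polyfun: "countable rat_polyfun"
proof -
  have "countable (rat_poly_level k)" for k
    by (induction k) (auto intro!: countable_image countable_SIGMA countable_rat_complex)
  then show ?thesis unfolding rat_polyfun_def by auto
qed

lemma rat_polyfun_subset_polyfun: "rat_polyfun \<subseteq> polyfun"
proof -
  have "rat_poly_level k \<subseteq> polyfun" for k
    by (induction k) (auto intro: polyfun.intros)
  then show ?thesis unfolding rat_polyfun_def by blast
qed

lemma rat_polyfun_const: "c \<in> rat_complex \<Longrightarrow> (\<lambda>z. c) \<in> rat_polyfun"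
  and rat_polyfun_coord: "(\<lambda>z. z $ i) \<in> rat_polyfun"
  unfolding rat_polyfun_def by (auto intro!: exI[of _ 0])

lemma rat_polyfun_add_mult:
  assumes "p \<in> rat_polyfun" "q \<in> rat_polyfun"
  shows "(\<lambda>z. p z + q z) \<in> rat_polyfun" "(\<lambda>z. p z * q z) \<in> rat_polyfun"
proof -
  have mono: "rat_poly_level k \<subseteq> rat_poly_level l" if "k \<le> l" for k l
    using that by (induction l) (auto simp: le_Suc_eq)
  obtain k l where "p \<in> rat_poly_level k" "q \<in> rat_poly_level l"
    using assms unfolding rat_polyfun_def by blast
  then have "p \<in> rat_poly_level (max k l)" "q \<in> rat_poly_level (max k l)"
    using mono[of k "max k l"] mono[of l "max k l"] by auto
  then have "(\<lambda>z. p z + q z) \<in> rat_poly_level (Suc (max k l))"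
    "(\<lambda>z. p z * q z) \<in> rat_poly_level (Suc (max k l))" by force+
  then show "(\<lambda>z. p z + q z) \<in> rat_polyfun" "(\<lambda>z. p z * q z) \<in> rat_polyfun"
    unfolding rat_polyfun_def by blast+
qed

lemma norm_mult_diff_le:
  fixes a b a' b' :: "'a::real_normed_algebra"
  assumes "norm a \<le> A" "norm b \<le> B" "norm (a - a') \<le> d" "norm (b - b') \<le> d" "d \<le> 1"
  shows "norm (a * b - a' * b') \<le> d * (A + B + 1)"
proof -
  have "0 \<le> A" "0 \<le> d" using assms(1,3) by (meson norm_ge_zero order_trans)+
  have b': "norm b' \<le> B + 1"
    using assms(2,4,5) norm_triangle_ineq2[of b' b] by (simp add: norm_minus_commute)
  have "a * b - a' * b' = a * (b - b') + (a - a') * b'" by (simp add: algebra_simps)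
  then have "norm (a * b - a' * b') \<le> norm a * norm (b - b') + norm (a - a') * norm b'"
    by (metis norm_mult_ineq norm_triangle_le add_mono)
  also have "\<dots> \<le> A * d + d * (B + 1)"
    using assms b' \<open>0 \<le> A\<close> \<open>0 \<le> d\<close> by (intro add_mono mult_mono) auto
  finally show ?thesis by (simp add: algebra_simps)
qed

lemma rat_polyfun_dense_polyfun:
  assumes K: "compact K" and p: "p \<in> polyfun" and e: "e > 0"
  shows "\<exists>q\<in>rat_polyfun. \<forall>z\<in>K. cmod (p z - q z) < e"
  using p e
proof (induction arbitrary: e rule: polyfun.induct)
  case (const c)
  then obtain c' where "c' \<in> rat_complex" "cmod (c - c') < e" using rat_complex_dense by blast
  then show ?case by (intro bexI[OF _ rat_polyfun_const]) auto
next
  case (coord i)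
  then show ?case by (intro bexI[OF _ rat_polyfun_coord[of i]]) auto
next
  case (add p q)
  obtain p' q' where pq': "p' \<in> rat_polyfun" "\<forall>z\<in>K. cmod (p z - p' z) < e/2"
    "q' \<in> rat_polyfun" "\<forall>z\<in>K. cmod (q z - q' z) < e/2"
    using add.IH add.prems by (meson half_gt_zero)
  have "cmod (p z + q z - (p' z + q' z)) < e" if "z \<in> K" for z
  proof -
    have "cmod (p z + q z - (p' z + q' z)) \<le> cmod (p z - p' z) + cmod (q z - q' z)"
      by (metis add_diff_add norm_triangle_ineq)
    moreover have "cmod (p z - p' z) < e/2" "cmod (q z - q' z) < e/2" using pq' that by auto
    ultimately show ?thesis by linarith
  qed
  then show ?case using pq' by (intro bexI[of _ "\<lambda>z. p' z + q' z"] rat_polyfun_add_mult(1)) auto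
next
  case (mult p q)
  have "bounded (p ` K)" "bounded (q ` K)"
    by (intro compact_imp_bounded compact_continuous_image K continuous_on_polyfun mult.hyps)+
  then obtain Bp Bq where B: "\<And>z. z \<in> K \<Longrightarrow> cmod (p z) \<le> Bp" "\<And>z. z \<in> K \<Longrightarrow> cmod (q z) \<le> Bq"
    "Bp \<ge> 0" "Bq \<ge> 0"
    unfolding bounded_pos by (auto intro: less_imp_le)
  define C where "C = Bp + Bq + 1"
  have C: "C > 0" using B(3,4) by (simp add: C_def)
  define d where "d = min 1 (e / (2 * C))"
  have "d * C \<le> e / (2 * C) * C" using C by (intro mult_right_mono) (auto simp: d_def)
  also have "\<dots> < e" using C mult.prems by simp
  finally have d: "d > 0" "d \<le> 1" "d * (Bp + Bq + 1) < e"
    using C mult.prems by (auto simp: d_def C_def)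
  obtain p' q' where pq': "p' \<in> rat_polyfun" "\<forall>z\<in>K. cmod (p z - p' z) < d"
    "q' \<in> rat_polyfun" "\<forall>z\<in>K. cmod (q z - q' z) < d"
    using mult.IH d(1) by meson
  have "cmod (p z * q z - p' z * q' z) < e" if "z \<in> K" for z
  proof -
    have "cmod (p z - p' z) \<le> d" "cmod (q z - q' z) \<le> d" using pq' that by auto
    from norm_mult_diff_le[OF B(1,2)[OF that] this d(2)] d(3) show ?thesis by linarith
  qed
  then show ?case using pq' by (intro bexI[of _ "\<lambda>z. p' z * q' z"] rat_polyfun_add_mult(2)) auto
qed

lemma rat_polyfun_dense_PK:
  assumes K: "compact K" and f: "f \<in> PK K" and e: "e > 0"
  shows "\<exists>q\<in>rat_polyfun. \<forall>z\<in>K. cmod (f z - q z) < e"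
proof -
  obtain N where N: "\<forall>z\<in>K. cmod (PK_approx K f N z - f z) < e/2"
    using PK_approx_close[OF f, of "e/2"] e by auto
  obtain q where q: "q \<in> rat_polyfun" "\<forall>z\<in>K. cmod (PK_approx K f N z - q z) < e/2"
    using rat_polyfun_dense_polyfun[OF K, of "PK_approx K f N" "e/2"] PK_approx(1)[OF f] e by auto
  have "cmod (f z - q z) < e" if "z \<in> K" for z
  proof -
    have "cmod (f z - q z) \<le> cmod (PK_approx K f N z - f z) + cmod (PK_approx K f N z - q z)"
      using norm_triangle_ineq[of "f z - PK_approx K f N z" "PK_approx K f N z - q z"]
      by (simp add: norm_minus_commute)
    moreover have "cmod (PK_approx K f N z - f z) < e/2" "cmod (PK_approx K f N z - q z) < e/2"
      using N q(2) that by auto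
    ultimately show ?thesis by linarith
  qed
  with q(1) show ?thesis by blast
qed

lemma hull_ext_polyfun_dist_le_dense:
  assumes K: "compact K" and D: "D \<subseteq> K" "K \<subseteq> closure D"
    and f: "f \<in> PK K" and q: "q \<in> polyfun" and w: "w \<in> poly_hull K"
    and close: "\<And>z. z \<in> D \<Longrightarrow> cmod (f z - q z) \<le> e"
  shows "cmod (q w - hull_ext K f w) \<le> e"
proof -
  have "closure D \<subseteq> K" using D K by (simp add: closure_minimal compact_imp_closed)
  moreover have "continuous_on K (\<lambda>z. cmod (f z - q z))"
    by (intro continuous_on_norm continuous_on_diff continuous_on_PK[OF f] continuous_on_polyfun q)
  ultimately have "continuous_on (closure D) (\<lambda>z. cmod (f z - q z))"
    by (rule continuous_on_subset[rotated])
  then have "(\<lambda>z. cmod (f z - q z)) ` closure D \<subseteq> {..e}"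
    by (rule image_closure_subset) (use close in auto)
  then have "cmod (q z - f z) \<le> e" if "z \<in> K" for z
    using D that by (auto simp: norm_minus_commute)
  then have "cmod (hull_ext K q w - hull_ext K f w) \<le> e"
    by (rule hull_ext_dist_le[OF polyfun_in_PK[OF q] f w])
  then show ?thesis by (simp only: hull_ext_polyfun[OF q w])
qed

lemma pred_Ball_countable:
  assumes "countable D" "\<And>z. z \<in> D \<Longrightarrow> Measurable.pred M (P z)"
  shows "Measurable.pred M (\<lambda>\<omega>. \<forall>z\<in>D. P z \<omega>)"
proof (cases "D = {}")
  case False
  have "{\<omega> \<in> space M. \<forall>z\<in>D. P z \<omega>} = space M \<inter> (\<Inter>z\<in>D. {\<omega> \<in> space M. P z \<omega>})"
    by auto
  also have "\<dots> \<in> sets M"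
    using assms False by (intro sets.Int sets.top sets.countable_INT') (auto simp: pred_def)
  finally show ?thesis unfolding pred_def .
qed simp

text \<open>For each $k$, choose measurably (as the least index in an enumeration of
  \<open>rat_polyfun\<close>) a rational polynomial that is $1/(k+1)$-close to $F\,\omega$ on a countable
  dense subset of $K$; its values at $w$ converge to the extension.\<close>

lemma borel_measurable_hull_ext:
  fixes K :: "(complex^'n) set"
  assumes K: "compact K" "K \<noteq> {}" and w: "w \<in> poly_hull K"
    and F: "\<And>\<omega>. \<omega> \<in> space M \<Longrightarrow> F \<omega> \<in> PK K"
    and meas: "\<And>z. z \<in> K \<Longrightarrow> (\<lambda>\<omega>. F \<omega> z) \<in> borel_measurable M"
  shows "(\<lambda>\<omega>. hull_ext K (F \<omega>) w) \<in> borel_measurable M"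
proof -
  obtain D where D: "countable D" "D \<subseteq> K" "K \<subseteq> closure D"
    using separable[of K] by blast
  define q where "q = from_nat_into (rat_polyfun :: (complex^'n \<Rightarrow> complex) set)"
  have q: "range q = rat_polyfun"
    unfolding q_def by (intro range_from_nat_into countable_rat_polyfun) (use rat_polyfun_coord in blast)
  define close where "close k n \<omega> \<longleftrightarrow> (\<forall>z\<in>D. cmod (F \<omega> z - q n z) \<le> 1 / Suc k)" for k n \<omega>
  define sel where "sel k \<omega> = (LEAST n. close k n \<omega>)" for k \<omega>
  have "Measurable.pred M (close k n)" for k n
    unfolding close_def
  proof (rule pred_Ball_countable[OF D(1)])
    fix z assume "z \<in> D"
    then have [measurable]: "(\<lambda>\<omega>. F \<omega> z) \<in> borel_measurable M" using meas D by auto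
    show "Measurable.pred M (\<lambda>\<omega>. cmod (F \<omega> z - q n z) \<le> 1 / Suc k)" by measurable
  qed
  then have "sel k \<in> measurable M (count_space UNIV)" for k
    unfolding sel_def by (rule measurable_Least)
  then have meas_sel: "(\<lambda>\<omega>. q (sel k \<omega>) w) \<in> borel_measurable M" for k
    by (rule measurable_compose_countable'[where f="\<lambda>n \<omega>. q n w" and I=UNIV, rotated]) auto
  have "(\<lambda>k. q (sel k \<omega>) w) \<longlonglongrightarrow> hull_ext K (F \<omega>) w" if \<omega>: "\<omega> \<in> space M" for \<omega>
  proof -
    have "cmod (q (sel k \<omega>) w - hull_ext K (F \<omega>) w) \<le> 1 / Suc k" for k
    proof -
      obtain p where p: "p \<in> rat_polyfun" "\<forall>z\<in>K. cmod (F \<omega> z - p z) < 1 / Suc k"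
        using rat_polyfun_dense_PK[OF K(1) F[OF \<omega>], of "1 / Suc k"] by auto
      then obtain n where "p = q n" using q by auto
      with p(2) D(2) have "close k n \<omega>" unfolding close_def by (auto intro: less_imp_le)
      then have "\<exists>n. close k n \<omega>" ..
      then have "close k (sel k \<omega>) \<omega>" unfolding sel_def by (rule LeastI_ex)
      moreover have "q (sel k \<omega>) \<in> polyfun" using q rat_polyfun_subset_polyfun by auto
      ultimately show ?thesis
        by (intro hull_ext_polyfun_dist_le_dense[OF K(1) D(2,3) F[OF \<omega>] _ w]) (auto simp: close_def)
    qed
    then have "(\<lambda>k. q (sel k \<omega>) w - hull_ext K (F \<omega>) w) \<longlonglongrightarrow> 0"
      by (intro Lim_null_comparison[OF always_eventually LIMSEQ_inverse_real_of_nat])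
         (simp add: inverse_eq_divide)
    then show ?thesis by (simp add: LIM_zero_iff)
  qed
  with meas_sel show ?thesis by (rule borel_measurable_LIMSEQ_metric)
qed

theorem proposition6p8:
  fixes M :: "'w measure"
    and K :: "(complex^'n) set"
    and A :: "(complex^'n \<Rightarrow> complex) set"
    and f :: "'m::finite \<Rightarrow> 'w \<Rightarrow> complex^'n \<Rightarrow> complex"
  assumes "compact K" and "K \<noteq> {}"
    and "A = CK K \<or> A = PK K"
    and "\<And>i \<omega>. \<omega> \<in> space M \<Longrightarrow> f i \<omega> \<in> A"
    and "\<And>i z. z \<in> K \<Longrightarrow> (\<lambda>\<omega>. f i \<omega> z) \<in> borel_measurable M"
  shows "random_compact_set M (\<lambda>\<omega>. joint_spectrum K A (\<lambda>i. f i \<omega>))"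
proof (cases "A = CK K")
  case True
  have "(\<lambda>\<omega>. (\<lambda>z. \<chi> i. f i \<omega> z) ` K) \<in> measurable M hausdorff_borel"
    using assms(4,5) True
    by (intro measurable_vec_image_hausdorff_borel[OF assms(1,2)]) (auto simp: CK_def)
  moreover have "joint_spectrum K A (\<lambda>i. f i \<omega>) = (\<lambda>z. \<chi> i. f i \<omega> z) ` K" if "\<omega> \<in> space M" for \<omega>
    unfolding True by (rule CK_joint_spectrum[OF assms(1)]) (use assms(4)[OF that] True in auto)
  ultimately show ?thesis unfolding random_compact_set_def by (subst measurable_cong) auto
next
  case False
  then have PK: "\<And>i \<omega>. \<omega> \<in> space M \<Longrightarrow> f i \<omega> \<in> PK K" using assms(3,4) by auto
  have "compact (poly_hull K)" "poly_hull K \<noteq> {}"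
    using compact_poly_hull[OF assms(1)] subset_poly_hull[of K] assms(2) by auto
  then have "(\<lambda>\<omega>. (\<lambda>w. \<chi> i. hull_ext K (f i \<omega>) w) ` poly_hull K) \<in> measurable M hausdorff_borel"
    using PK assms(5)
    by (intro measurable_vec_image_hausdorff_borel continuous_on_hull_ext
        borel_measurable_hull_ext[OF assms(1,2)]) auto
  moreover have "joint_spectrum K A (\<lambda>i. f i \<omega>) = (\<lambda>w. \<chi> i. hull_ext K (f i \<omega>) w) ` poly_hull K"
    if "\<omega> \<in> space M" for \<omega>
    using False assms(3) by (simp add: PK_joint_spectrum[OF assms(1,2) PK[OF that]])
  ultimately show ?thesis unfolding random_compact_set_def by (subst measurable_cong) auto
qed

end
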